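(* For all positive integers $m,k$ and all $n\in\mathbb{Z}$, let $$D(n,m,s,k)=\det\left(f(n + mi, x, s)^j f(n + mi - 1, x, qs)^{k-j}\right)_{i,j=0}^k .$$ Then $$D(n,m,s,k) = (-1)^{\binom{k+1}{2}n + \binom{k+1}{3}m}\, s^{\binom{k+1}{2}(n-1) + \binom{k+1}{3}m}\, q^{\binom{k+1}{2}\binom{n}{2} + nm\binom{k+1}{3} + \binom{k+1}{3}\binom{m}{2} + \binom{k+1}{4}m^2} \prod_{j=0}^{k-1} \mathrm{fac}(k - j, x, q^{mj+n}s, m).$$
   Context: Let $x,s,q$ be indeterminates; all quantities live in the field of rational functions in $x,s,q$. The Carlitz $q$-Fibonacci polynomials $f(n,x,s)$ are defined by $f(0,x,s)=0$, $f(1,x,s)=1$ and $f(n, x, s) = x f(n-1, x, s) + q^{n-2} s f(n-2, x, s)$; this recurrence is required to hold for all $n\in\mathbb{Z}$, which uniquely extends $f(n,x,s)$ to negative $n$. Here $f(n,x,q^a s)$ means $f(n,x,s)$ with $s$ replaced by $q^a s$. For positive integers $r,m$ define $\mathrm{fac}(r,x,s,m)=\prod_{i=1}^r f(im,x,s)$. *)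

theory Defs
  imports Main "Jordan_Normal_Form.Determinant"
begin

text \<open>The parameter q is written first: cfib q x s n = f(n,x,s).\<close>
definition cfib :: "'a::field \<Rightarrow> 'a \<Rightarrow> 'a \<Rightarrow> int \<Rightarrow> 'a" where
  "cfib q x s = (THE f. f 0 = 0 \<and> f 1 = 1 \<and>
     (\<forall>n::int. f n = x * f (n - 1) + q powi (n - 2) * s * f (n - 2)))"

definition cfac :: "'a::field \<Rightarrow> nat \<Rightarrow> 'a \<Rightarrow> 'a \<Rightarrow> nat \<Rightarrow> 'a" where
  "cfac q r x s m = (\<Prod>i=1..r. cfib q x s (int (i * m)))"

end

theory Submission
  imports Defs
begin

text \<open>With \<open>A_i = n + m i\<close>, \<open>a_i = f(A_i, x, s)\<close> and \<open>b_i = f(A_i - 1, x, q s)\<close> the matrix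
  \<open>(a_i^j b_i^(k-j))\<close> is a homogeneous Vandermonde matrix, so its determinant is the product
  of the minors \<open>a_j b_i - a_i b_j\<close> over \<open>i < j\<close>. A Cassini-type identity evaluates each minor:
  \<open>f(a + r, x, s) f(a - 1, x, q s) - f(a, x, s) f(a + r - 1, x, q s)
     = (-1)^a s^(a-1) q^(a(a-1)/2) f(r, x, q^a s)\<close>,
  since both sides satisfy the recurrence of \<open>f(-, x, q^a s)\<close> in \<open>r\<close>. So row \<open>i\<close> contributes
  \<open>fac(k - i, x, q^(A_i) s, m)\<close> times a monomial in \<open>-1\<close>, \<open>s\<close>, \<open>q\<close>, and by the hockey-stick
  identity the exponents of these monomials add up to the binomial expressions of the statement.\<close>

section \<open>Two-sided linear recurrences\<close>

lemma int_recurrence_unique: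
  fixes A B F G :: "int \<Rightarrow> 'a::field"
  assumes B: "\<And>n. B n \<noteq> 0"
    and F: "\<And>n. F n = A n * F (n - 1) + B n * F (n - 2)"
    and G: "\<And>n. G n = A n * G (n - 1) + B n * G (n - 2)"
    and init: "F 0 = G 0" "F 1 = G 1"
  shows "F = G"
proof
  fix n :: int
  have up: "F (int k) = G (int k) \<and> F (int k + 1) = G (int k + 1)" for k
  proof (induction k)
    case 0
    then show ?case using init by simp
  next
    case (Suc k)
    have "F (int k + 2) = G (int k + 2)"
      using F[of "int k + 2"] G[of "int k + 2"] Suc by (simp add: add.commute)
    then show ?case using Suc by (simp add: add.commute add.left_commute)
  qed
  have down: "F (- int k) = G (- int k) \<and> F (1 - int k) = G (1 - int k)" for k
  proof (induction k)
    case 0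
    then show ?case using init by simp
  next
    case (Suc k)
    have "F (1 - int k) = A (1 - int k) * F (- int k) + B (1 - int k) * F (-1 - int k)"
      and "G (1 - int k) = A (1 - int k) * G (- int k) + B (1 - int k) * G (-1 - int k)"
      using F[of "1 - int k"] G[of "1 - int k"] by simp_all
    with Suc have "B (1 - int k) * F (-1 - int k) = B (1 - int k) * G (-1 - int k)"
      by (metis add_left_cancel)
    then have "F (-1 - int k) = G (-1 - int k)" using B by simp
    then show ?case using Suc by (simp add: algebra_simps)
  qed
  show "F n = G n"
  proof (cases "n \<ge> 0")
    case True
    then show ?thesis using up[of "nat n"] by simp
  next
    case False
    then show ?thesis using down[of "nat (- n)"] by simp
  qed
qed

lemma int_recurrence_exists:
  fixes A B :: "int \<Rightarrow> 'a::field"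
  assumes B: "\<And>n. B n \<noteq> 0"
  shows "\<exists>F. F 0 = u \<and> F 1 = v \<and> (\<forall>n. F n = A n * F (n - 1) + B n * F (n - 2))"
proof -
  \<comment> \<open>\<open>fw k = (F k, F (k + 1))\<close> runs the recurrence forwards,
    \<open>bw k = (F (- k), F (1 - k))\<close> backwards.\<close>
  define fw where "fw = rec_nat (u, v) (\<lambda>k p. (snd p, A (int k + 2) * snd p + B (int k + 2) * fst p))"
  define bw where "bw = rec_nat (u, v) (\<lambda>k p. ((snd p - A (1 - int k) * fst p) / B (1 - int k), fst p))"
  have fw0: "fw 0 = (u, v)"
    and fwS: "fw (Suc k) = (snd (fw k), A (int k + 2) * snd (fw k) + B (int k + 2) * fst (fw k))" for k
    by (simp_all add: fw_def)
  have bw0: "bw 0 = (u, v)"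
    and bwS: "bw (Suc k) = ((snd (bw k) - A (1 - int k) * fst (bw k)) / B (1 - int k), fst (bw k))" for k
    by (simp_all add: bw_def)
  define F where "F n = (if 0 \<le> n then fst (fw (nat n)) else fst (bw (nat (- n))))" for n
  have F_nat: "F (int k) = fst (fw k)" for k
    by (simp add: F_def)
  have F_neg: "F (- int k) = fst (bw k)" for k
    by (cases k) (auto simp: F_def bw0 fw0 nat_add_distrib)
  have "F n = A n * F (n - 1) + B n * F (n - 2)" for n
  proof -
    consider "n \<ge> 2" | "n = 1" | "n \<le> 0" by linarith
    then show ?thesis
    proof cases
      case 1
      then obtain k where k: "n = int k + 2"
        by (metis add.commute le_add_diff_inverse zle_iff_zadd)
      have "F n = fst (fw (Suc (Suc k)))" using F_nat[of "Suc (Suc k)"] k by (simp add: add.commute)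
      also have "\<dots> = A n * fst (fw (Suc k)) + B n * fst (fw k)" using k by (simp add: fwS)
      also have "fst (fw (Suc k)) = F (n - 1)" using F_nat[of "Suc k"] k by (simp add: add.commute)
      also have "fst (fw k) = F (n - 2)" using F_nat[of k] k by simp
      finally show ?thesis .
    next
      case 2
      have "F (-1) = (v - A 1 * u) / B 1" using F_neg[of 1] by (simp add: bwS bw0)
      moreover have "F 1 = v" "F 0 = u" using F_nat[of 1] F_nat[of 0] by (simp_all add: fwS fw0)
      ultimately show ?thesis using 2 B[of 1] by (simp add: field_simps)
    next
      case 3
      then obtain k where k: "n = - int k"
        by (metis minus_minus nonneg_int_cases neg_0_le_iff_le)
      have "F (n - 2) = fst (bw (Suc (Suc k)))" using F_neg[of "Suc (Suc k)"] k by (simp add: algebra_simps)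
      also have "\<dots> = (F n - A n * fst (bw (Suc k))) / B n" using F_neg[of k] k by (simp add: bwS)
      also have "fst (bw (Suc k)) = F (- int (Suc k))" by (rule F_neg[symmetric])
      also have "- int (Suc k) = n - 1" using k by simp
      finally show ?thesis using B[of n] by (simp add: field_simps)
    qed
  qed
  moreover have "F 0 = u" "F 1 = v" using F_nat[of 0] F_nat[of 1] by (simp_all add: fw0 fwS)
  ultimately show ?thesis by blast
qed

section \<open>Carlitz \<open>q\<close>-Fibonacci polynomials\<close>

lemma cfib_characterization:
  fixes q x s :: "'a::field"
  assumes "q \<noteq> 0" "s \<noteq> 0"
  shows "cfib q x s 0 = 0 \<and> cfib q x s 1 = 1 \<and>
     (\<forall>n. cfib q x s n = x * cfib q x s (n - 1) + q powi (n - 2) * s * cfib q x s (n - 2))"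
proof -
  define P where "P f \<longleftrightarrow> f 0 = 0 \<and> f 1 = (1::'a) \<and>
     (\<forall>n. f n = x * f (n - 1) + q powi (n - 2) * s * f (n - 2))" for f
  have B: "\<And>n. q powi (n - 2) * s \<noteq> 0" using assms by simp
  obtain f where f: "P f"
    using int_recurrence_exists[where A = "\<lambda>_. x" and B = "\<lambda>n. q powi (n - 2) * s", OF B]
    unfolding P_def by blast
  have "g = f" if "P g" for g
  proof (rule int_recurrence_unique[where A = "\<lambda>_. x", OF B])
    from that f show "g 0 = f 0" "g 1 = f 1" unfolding P_def by metis+
    from that f show "\<And>n. g n = x * g (n - 1) + q powi (n - 2) * s * g (n - 2)"
      and "\<And>n. f n = x * f (n - 1) + q powi (n - 2) * s * f (n - 2)" unfolding P_def by blast+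
  qed
  with f have "\<exists>!f. P f" by blast
  then have "P (THE f. P f)" by (rule theI')
  then show ?thesis unfolding cfib_def P_def .
qed

lemma cfib_0: "q \<noteq> 0 \<Longrightarrow> s \<noteq> 0 \<Longrightarrow> cfib q x s 0 = 0"
  using cfib_characterization by blast

lemma cfib_1: "q \<noteq> 0 \<Longrightarrow> s \<noteq> 0 \<Longrightarrow> cfib q x s 1 = 1"
  using cfib_characterization by blast

lemma cfib_rec:
  fixes q x s :: "'a::field"
  assumes "q \<noteq> 0" "s \<noteq> 0"
  shows "cfib q x s (n + 2) = x * cfib q x s (n + 1) + q powi n * s * cfib q x s n"
proof -
  have "cfib q x s (n + 2) = x * cfib q x s (n + 2 - 1) + q powi (n + 2 - 2) * s * cfib q x s (n + 2 - 2)"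
    using cfib_characterization[OF assms, of x] by blast
  then show ?thesis by (simp add: add.commute)
qed

lemma cfib_rec_scaled:
  fixes q x s :: "'a::field"
  assumes q: "q \<noteq> 0" and s: "s \<noteq> 0"
  shows "cfib q x (q powi a * s) (n + 2)
       = x * cfib q x (q powi a * s) (n + 1) + q powi (n + a) * s * cfib q x (q powi a * s) n"
  using cfib_rec[of q "q powi a * s" x n] q s by (simp add: power_int_add mult.assoc)

text \<open>Closed form of \<open>f(a + 1, x, s) f(a - 1, x, q s) - f(a, x, s) f(a, x, q s)\<close>, which is \<open>1/s\<close>
  at \<open>a = 0\<close> and is multiplied by \<open>-q^a s\<close> when \<open>a\<close> increases by one.\<close>
definition cassini_value :: "'a::field \<Rightarrow> 'a \<Rightarrow> int \<Rightarrow> 'a" where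
  "cassini_value q s a = (-1) powi a * s powi (a - 1) * q powi (a * (a - 1) div 2)"

lemma cassini_value_0: "s \<noteq> 0 \<Longrightarrow> cassini_value q s 0 = inverse s"
  by (simp add: cassini_value_def power_int_minus)

lemma cassini_value_succ:
  fixes q s :: "'a::field"
  assumes q: "q \<noteq> 0" and s: "s \<noteq> 0"
  shows "cassini_value q s (a + 1) = - (q powi a * s) * cassini_value q s a"
proof -
  have "(a + 1) * (a + 1 - 1) div 2 = a * (a - 1) div 2 + a"
  proof -
    have "(a + 1) * (a + 1 - 1) = a * (a - 1) + 2 * a" by (simp add: algebra_simps)
    then show ?thesis by simp
  qed
  then show ?thesis using q s
    by (simp add: cassini_value_def power_int_add power_int_diff algebra_simps)
qed

lemma cfib_cassini:
  fixes q x s :: "'a::field"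
  assumes q: "q \<noteq> 0" and s: "s \<noteq> 0"
  shows "cfib q x s (a + 1) * cfib q x (q * s) (a - 1) - cfib q x s a * cfib q x (q * s) a
       = cassini_value q s a"
proof -
  let ?f = "cfib q x s" and ?g = "cfib q x (q * s)"
  define D where "D a = ?f (a + 1) * ?g (a - 1) - ?f a * ?g a" for a
  have g_rec: "?g (a + 1) = x * ?g a + q powi a * s * ?g (a - 1)" for a
    using cfib_rec_scaled[OF q s, of x 1 "a - 1"] by (simp add: algebra_simps)
  have D_succ: "D (a + 1) = - (q powi a * s) * D a" for a
    unfolding D_def using cfib_rec[OF q s, of x a] g_rec[of a]
    by (simp add: add.assoc algebra_simps)
  have "?g (-1) = inverse s"
    using g_rec[of 0] cfib_0[of q "q * s" x] cfib_1[of q "q * s" x] q s by (simp add: field_simps)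
  then have D_0: "D 0 = cassini_value q s 0"
    unfolding D_def cassini_value_0[OF s] using cfib_0[OF q s] cfib_1[OF q s] by simp
  have "D a = cassini_value q s a"
  proof (induction a rule: int_induct[where k = 0])
    case base
    then show ?case by (rule D_0)
  next
    case (step1 i)
    then show ?case using D_succ[of i] cassini_value_succ[OF q s, of i] by simp
  next
    case (step2 i)
    then show ?case
      using D_succ[of "i - 1"] cassini_value_succ[OF q s, of "i - 1"] q s by simp
  qed
  then show ?thesis unfolding D_def .
qed

lemma cfib_shifted_cassini:
  fixes q x s :: "'a::field"
  assumes q: "q \<noteq> 0" and s: "s \<noteq> 0"
  shows "cfib q x s (a + int r) * cfib q x (q * s) (a - 1) - cfib q x s a * cfib q x (q * s) (a + int r - 1)
       = cassini_value q s a * cfib q x (q powi a * s) (int r)"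
proof -
  let ?f = "cfib q x s" and ?g = "cfib q x (q * s)" and ?h = "cfib q x (q powi a * s)"
  have qa: "q powi a * s \<noteq> 0" using q s by simp
  define E where "E r \<longleftrightarrow> ?f (a + int r) * ?g (a - 1) - ?f a * ?g (a + int r - 1)
      = cassini_value q s a * ?h (int r)" for r
  have "E r \<and> E (Suc r)"
  proof (induction r)
    case 0
    show ?case
      unfolding E_def using cfib_0[OF q qa] cfib_1[OF q qa] cfib_cassini[OF q s, of x a] by simp
  next
    case (Suc r)
    have f_rec: "?f (a + int r + 2) = x * ?f (a + int r + 1) + q powi (a + int r) * s * ?f (a + int r)"
      by (rule cfib_rec[OF q s])
    have g_rec: "?g (a + int r + 1) = x * ?g (a + int r) + q powi (a + int r) * s * ?g (a + int r - 1)"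
      using cfib_rec_scaled[OF q s, of x 1 "a + int r - 1"] by (simp add: algebra_simps)
    have h_rec: "?h (int r + 2) = x * ?h (int r + 1) + q powi (a + int r) * s * ?h (int r)"
      using cfib_rec_scaled[OF q s, of x a "int r"] by (simp add: add.commute)
    from Suc have "E (Suc (Suc r))"
      unfolding E_def using f_rec g_rec h_rec by (simp add: algebra_simps)
    with Suc show ?case by simp
  qed
  then show ?thesis unfolding E_def by simp
qed

lemma prod_cfib_minors:
  fixes q x s :: "'a::field"
  assumes q: "q \<noteq> 0" and s: "s \<noteq> 0"
  shows "(\<Prod>d=1..r. cfib q x s (a + int (d * m)) * cfib q x (q * s) (a - 1)
                  - cfib q x s a * cfib q x (q * s) (a + int (d * m) - 1))
       = cassini_value q s a ^ r * cfac q r x (q powi a * s) m"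
proof -
  have "(\<Prod>d=1..r. cfib q x s (a + int (d * m)) * cfib q x (q * s) (a - 1)
                  - cfib q x s a * cfib q x (q * s) (a + int (d * m) - 1))
      = (\<Prod>d=1..r. cassini_value q s a * cfib q x (q powi a * s) (int (d * m)))"
    by (intro prod.cong refl) (simp only: cfib_shifted_cassini[OF q s])
  then show ?thesis by (simp add: cfac_def prod.distrib)
qed

section \<open>Homogeneous Vandermonde determinants\<close>

definition homogeneous_vandermonde ::
    "nat \<Rightarrow> (nat \<Rightarrow> 'a::comm_ring_1) \<Rightarrow> (nat \<Rightarrow> 'a) \<Rightarrow> 'a mat" where
  "homogeneous_vandermonde k a b = mat (Suc k) (Suc k) (\<lambda>(i, j). a i ^ j * b i ^ (k - j))"

lemma det_scale_rows:
  fixes d :: "nat \<Rightarrow> 'a::comm_ring_1"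
  shows "det (mat n n (\<lambda>(i, j). d i * B i j)) = (\<Prod>i<n. d i) * det (mat n n (\<lambda>(i, j). B i j))"
proof -
  have "mat n n (\<lambda>(i, j). d i * B i j) = mat\<^sub>r n n (\<lambda>i. d i \<cdot>\<^sub>v vec n (B i))"
    and "mat n n (\<lambda>(i, j). B i j) = mat\<^sub>r n n (\<lambda>i. vec n (B i))"
    by (auto intro!: eq_matI)
  then show ?thesis using det_rows_mul[of "\<lambda>i. vec n (B i)" n d] by (simp add: atLeast0LessThan)
qed

definition column_difference_mat :: "nat \<Rightarrow> 'a::comm_ring_1 \<Rightarrow> 'a mat" where
  "column_difference_mat n c = mat n n (\<lambda>(i, j). if i = j then 1 else if j = Suc i then - c else 0)"

lemma column_difference_mat_carrier: "column_difference_mat n c \<in> carrier_mat n n"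
  by (simp add: column_difference_mat_def)

lemma det_column_difference_mat: "det (column_difference_mat n c) = 1"
proof -
  have "upper_triangular (column_difference_mat n c)"
    unfolding column_difference_mat_def upper_triangular_def by auto
  then have "det (column_difference_mat n c) = prod_list (diag_mat (column_difference_mat n c))"
    by (rule det_upper_triangular[OF _ column_difference_mat_carrier])
  also have "\<dots> = 1"
    unfolding prod_list_diag_prod by (simp add: column_difference_mat_def)
  finally show ?thesis .
qed

lemma mult_column_difference_mat_index:
  assumes M: "M \<in> carrier_mat n n" and "i < n" "j < n"
  shows "(M * column_difference_mat n c) $$ (i, j) = M $$ (i, j) - (if j = 0 then 0 else c * M $$ (i, j - 1))"
proof -
  have "(M * column_difference_mat n c) $$ (i, j)
      = (\<Sum>l<n. (if l = j then M $$ (i, l) else 0) + (if Suc l = j then - c * M $$ (i, l) else 0))"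
    using M assms by (auto simp: column_difference_mat_def scalar_prod_def atLeast0LessThan intro!: sum.cong)
  also have "\<dots> = M $$ (i, j) + (\<Sum>l<n. if Suc l = j then - c * M $$ (i, l) else 0)"
    using \<open>j < n\<close> by (simp add: sum.distrib)
  also have "(\<Sum>l<n. if Suc l = j then - c * M $$ (i, l) else 0) = (if j = 0 then 0 else - c * M $$ (i, j - 1))"
    using \<open>j < n\<close> by (cases j) (auto simp: sum.delta sum.delta')
  finally show ?thesis by simp
qed

lemma det_homogeneous_vandermonde_Suc_degenerate:
  assumes b0: "b 0 = 0"
  shows "det (homogeneous_vandermonde (Suc k) a b)
       = (\<Prod>j\<le>k. a (Suc j) * b 0 - a 0 * b (Suc j))
         * det (homogeneous_vandermonde k (\<lambda>i. a (Suc i)) (\<lambda>i. b (Suc i)))"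
proof -
  let ?M = "homogeneous_vandermonde (Suc k) a b"
    and ?W = "homogeneous_vandermonde k (\<lambda>i. a (Suc i)) (\<lambda>i. b (Suc i))"
  have M: "?M \<in> carrier_mat (Suc (Suc k)) (Suc (Suc k))"
    by (simp add: homogeneous_vandermonde_def)
  have "det ?M = (\<Sum>j<Suc (Suc k). ?M $$ (0, j) * cofactor ?M 0 j)"
    by (rule laplace_expansion_row[OF M]) simp
  also have "\<dots> = a 0 ^ Suc k * cofactor ?M 0 (Suc k)"
  proof -
    have "(\<Sum>j<Suc k. ?M $$ (0, j) * cofactor ?M 0 j) = 0"
      by (rule sum.neutral) (auto simp: homogeneous_vandermonde_def b0 power_0_left)
    then show ?thesis by (simp add: homogeneous_vandermonde_def)
  qed
  also have "mat_delete ?M 0 (Suc k)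
      = mat (Suc k) (Suc k) (\<lambda>(i, j). b (Suc i) * (a (Suc i) ^ j * b (Suc i) ^ (k - j)))"
    by (rule eq_matI) (auto simp: mat_delete_def homogeneous_vandermonde_def Suc_diff_le)
  then have "cofactor ?M 0 (Suc k) = (-1) ^ Suc k * ((\<Prod>i<Suc k. b (Suc i)) * det ?W)"
    unfolding cofactor_def homogeneous_vandermonde_def by (simp add: det_scale_rows)
  also have "a 0 ^ Suc k * ((-1) ^ Suc k * ((\<Prod>i<Suc k. b (Suc i)) * det ?W))
      = ((- a 0) ^ Suc k * (\<Prod>i<Suc k. b (Suc i))) * det ?W"
    by (simp only: power_minus[of "a 0"] mult_ac)
  also have "(- a 0) ^ Suc k * (\<Prod>i<Suc k. b (Suc i)) = (\<Prod>j\<le>k. - a 0 * b (Suc j))"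
    by (simp only: prod.distrib prod_constant card_atMost lessThan_Suc_atMost)
  finally show ?thesis by (simp add: b0)
qed

lemma det_homogeneous_vandermonde_Suc_regular:
  fixes a b :: "nat \<Rightarrow> 'a::field"
  assumes b0: "b 0 \<noteq> 0"
  shows "det (homogeneous_vandermonde (Suc k) a b)
       = (\<Prod>j\<le>k. a (Suc j) * b 0 - a 0 * b (Suc j))
         * det (homogeneous_vandermonde k (\<lambda>i. a (Suc i)) (\<lambda>i. b (Suc i)))"
proof -
  let ?M = "homogeneous_vandermonde (Suc k) a b"
    and ?W = "homogeneous_vandermonde k (\<lambda>i. a (Suc i)) (\<lambda>i. b (Suc i))"
  define K where "K = Suc (Suc k)"
  define c where "c = a 0 / b 0"
  have c: "a 0 - c * b 0 = 0" using b0 by (simp add: c_def)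
  \<comment> \<open>Subtracting \<open>c\<close> times column \<open>j - 1\<close> from column \<open>j\<close> clears the first row
    except for its first entry.\<close>
  define N where "N = mat K K (\<lambda>(i, j). if j = 0 then b i ^ Suc k
         else (a i - c * b i) * (a i ^ (j - 1) * b i ^ (k - (j - 1))))"
  have M: "?M \<in> carrier_mat K K" by (simp add: homogeneous_vandermonde_def K_def)
  have "?M * column_difference_mat K c = N"
  proof (rule eq_matI)
    fix i j assume "i < dim_row N" "j < dim_col N"
    then have ij: "i < K" "j < K" by (simp_all add: N_def)
    show "(?M * column_difference_mat K c) $$ (i, j) = N $$ (i, j)"
      using ij unfolding mult_column_difference_mat_index[OF M ij]
      by (cases j) (auto simp: homogeneous_vandermonde_def N_def K_def Suc_diff_le algebra_simps)
  qed (simp_all add: N_def K_def homogeneous_vandermonde_def column_difference_mat_def)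
  then have "det ?M = det N"
    using det_mult[OF M column_difference_mat_carrier, of c] by (simp add: det_column_difference_mat)
  also have "\<dots> = (\<Sum>j<K. N $$ (0, j) * cofactor N 0 j)"
    by (rule laplace_expansion_row) (simp_all add: N_def K_def)
  also have "\<dots> = b 0 ^ Suc k * cofactor N 0 0"
  proof -
    have "(\<Sum>j<Suc k. N $$ (0, Suc j) * cofactor N 0 (Suc j)) = 0"
      by (rule sum.neutral) (auto simp: N_def K_def c)
    moreover have "N $$ (0, 0) = b 0 ^ Suc k" by (simp add: N_def K_def)
    ultimately show ?thesis unfolding K_def sum.lessThan_Suc_shift by simp
  qed
  also have "mat_delete N 0 0 = mat (Suc k) (Suc k)
      (\<lambda>(i, j). (a (Suc i) - c * b (Suc i)) * (a (Suc i) ^ j * b (Suc i) ^ (k - j)))"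
    by (rule eq_matI) (auto simp: mat_delete_def N_def K_def)
  then have "cofactor N 0 0 = (\<Prod>i<Suc k. a (Suc i) - c * b (Suc i)) * det ?W"
    unfolding cofactor_def homogeneous_vandermonde_def by (simp add: det_scale_rows)
  also have "b 0 ^ Suc k * ((\<Prod>i<Suc k. a (Suc i) - c * b (Suc i)) * det ?W)
      = (\<Prod>j\<le>k. b 0 * (a (Suc j) - c * b (Suc j))) * det ?W"
    by (simp add: prod.distrib lessThan_Suc_atMost)
  also have "(\<Prod>j\<le>k. b 0 * (a (Suc j) - c * b (Suc j))) = (\<Prod>j\<le>k. a (Suc j) * b 0 - a 0 * b (Suc j))"
    using b0 by (intro prod.cong refl) (simp add: c_def field_simps)
  finally show ?thesis .
qed

lemma det_homogeneous_vandermonde: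
  fixes a b :: "nat \<Rightarrow> 'a::field"
  shows "det (homogeneous_vandermonde k a b) = (\<Prod>i\<le>k. \<Prod>j\<in>{i<..k}. a j * b i - a i * b j)"
proof (induction k arbitrary: a b)
  case 0
  show ?case by (simp add: homogeneous_vandermonde_def det_single)
next
  case (Suc k)
  have "det (homogeneous_vandermonde (Suc k) a b)
      = (\<Prod>j\<le>k. a (Suc j) * b 0 - a 0 * b (Suc j))
        * det (homogeneous_vandermonde k (\<lambda>i. a (Suc i)) (\<lambda>i. b (Suc i)))"
    using det_homogeneous_vandermonde_Suc_degenerate det_homogeneous_vandermonde_Suc_regular by blast
  also have "\<dots> = (\<Prod>j\<in>{0<..Suc k}. a j * b 0 - a 0 * b j)
      * (\<Prod>i\<le>k. \<Prod>j\<in>{Suc i<..Suc k}. a j * b (Suc i) - a (Suc i) * b j)"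
  proof -
    have "{0<..Suc k} = Suc ` {..k}" and "{Suc i<..Suc k} = Suc ` {i<..k}" for i
      by (simp_all add: atMost_atLeast0 flip: atLeastSucAtMost_greaterThanAtMost)
    then show ?thesis by (simp add: Suc.IH prod.reindex)
  qed
  also have "\<dots> = (\<Prod>i\<le>Suc k. \<Prod>j\<in>{i<..Suc k}. a j * b i - a i * b j)"
    by (simp only: prod.atMost_Suc_shift)
  finally show ?case .
qed

section \<open>Summing the exponents\<close>

lemma sum_diff_mult_choose: "(\<Sum>i\<le>k. (k - i) * (i choose p)) = Suc k choose (p + 2)"
proof (induction k)
  case 0
  show ?case by simp
next
  case (Suc k)
  have "(\<Sum>i\<le>Suc k. (Suc k - i) * (i choose p)) = (\<Sum>i\<le>k. (Suc k - i) * (i choose p))"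
    by simp
  also have "\<dots> = (\<Sum>i\<le>k. (k - i) * (i choose p) + (i choose p))"
    by (intro sum.cong refl) (simp add: Suc_diff_le)
  also have "\<dots> = (Suc k choose (p + 2)) + (Suc k choose Suc p)"
    by (simp add: sum.distrib Suc.IH sum_choose_upper)
  also have "\<dots> = Suc (Suc k) choose (p + 2)"
    by (simp add: numeral_2_eq_2)
  finally show ?case .
qed

lemma sum_int_diff_mult_choose:
  "(\<Sum>i\<le>k. int (k - i) * int (i choose p)) = int (Suc k choose (p + 2))"
  by (simp only: sum_diff_mult_choose flip: of_nat_mult of_nat_sum)

lemma two_mult_choose_two: "2 * int (m choose 2) = int m * (int m - 1)"
proof (induction m)
  case 0
  show ?case by simp
next
  case (Suc m)
  have "Suc m choose 2 = m + (m choose 2)" by (simp add: numeral_2_eq_2)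
  then show ?case using Suc by (simp add: algebra_simps)
qed

lemma triangular_affine:
  fixes n :: int
  shows "(n + int m * int i) * (n + int m * int i - 1) div 2
       = n * (n - 1) div 2 + n * int m * int i + int (m choose 2) * int i + int m ^ 2 * int (i choose 2)"
proof -
  have "2 * (n * (n - 1) div 2) = n * (n - 1)" by simp
  then have "(n + int m * int i) * (n + int m * int i - 1)
      = 2 * (n * (n - 1) div 2 + n * int m * int i + int (m choose 2) * int i + int m ^ 2 * int (i choose 2))"
    by (simp add: algebra_simps power2_eq_square two_mult_choose_two)
  then show ?thesis by simp
qed

lemma power_int_sum:
  fixes x :: "'a::field"
  assumes "x \<noteq> 0"
  shows "x powi (\<Sum>i\<in>I. e i) = (\<Prod>i\<in>I. x powi e i)"
proof (cases "finite I")
  case True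
  then show ?thesis by (induction I rule: finite_induct) (simp_all add: power_int_add assms)
qed simp

lemma prod_cassini_value_powers:
  fixes q s :: "'a::field" and n :: int
  assumes q: "q \<noteq> 0" and s: "s \<noteq> 0"
  shows "(\<Prod>i\<le>k. cassini_value q s (n + int m * int i) ^ (k - i))
       = (- 1) powi (int (Suc k choose 2) * n + int (Suc k choose 3) * int m)
         * s powi (int (Suc k choose 2) * (n - 1) + int (Suc k choose 3) * int m)
         * q powi (int (Suc k choose 2) * (n * (n - 1) div 2) + n * int m * int (Suc k choose 3)
                   + int (Suc k choose 3) * int (m choose 2) + int (Suc k choose 4) * int m ^ 2)"
proof -
  have S0: "(\<Sum>i\<le>k. int (k - i)) = int (Suc k choose 2)"
    using sum_int_diff_mult_choose[of k 0] by (simp only: binomial_n_0 of_nat_1 mult_1_right add_0)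
  have S1: "(\<Sum>i\<le>k. int (k - i) * int i) = int (Suc k choose 3)"
    using sum_int_diff_mult_choose[of k 1] by (simp add: numeral_3_eq_3)
  have S2: "(\<Sum>i\<le>k. int (k - i) * int (i choose 2)) = int (Suc k choose 4)"
    using sum_int_diff_mult_choose[of k 2] by (simp only: numeral_plus_numeral semiring_norm)
  let ?A = "\<lambda>i. n + int m * int i"
  have "(\<Prod>i\<le>k. cassini_value q s (?A i) ^ (k - i))
      = (-1) powi (\<Sum>i\<le>k. ?A i * int (k - i)) * s powi (\<Sum>i\<le>k. (?A i - 1) * int (k - i))
        * q powi (\<Sum>i\<le>k. (?A i * (?A i - 1) div 2) * int (k - i))"
    by (simp add: cassini_value_def power_mult_distrib power_int_power' prod.distrib
        flip: power_int_sum[OF q] power_int_sum[OF s] power_int_sum[of "-1"])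
  also have "(\<Sum>i\<le>k. ?A i * int (k - i))
      = (\<Sum>i\<le>k. n * int (k - i) + int m * (int (k - i) * int i))"
    by (intro sum.cong refl) (simp add: algebra_simps)
  also have "(\<Sum>i\<le>k. (?A i - 1) * int (k - i))
      = (\<Sum>i\<le>k. (n - 1) * int (k - i) + int m * (int (k - i) * int i))"
    by (intro sum.cong refl) (simp add: algebra_simps)
  also have "(\<Sum>i\<le>k. (?A i * (?A i - 1) div 2) * int (k - i))
      = (\<Sum>i\<le>k. (n * (n - 1) div 2) * int (k - i) + (n * int m + int (m choose 2)) * (int (k - i) * int i)
          + int m ^ 2 * (int (k - i) * int (i choose 2)))"
    by (intro sum.cong refl) (simp only: triangular_affine, simp add: algebra_simps)
  finally show ?thesis
    by (simp only: sum.distrib flip: sum_distrib_left S0 S1 S2) (simp add: algebra_simps)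
qed

lemma prod_greaterThanAtMost_shift:
  fixes i k :: nat
  shows "(\<Prod>j\<in>{i<..k}. f j) = (\<Prod>d=1..k-i. f (i + d))"
proof (cases "i \<le> k")
  case True
  then have "{i<..k} = {1 + i..(k - i) + i}" by (simp flip: atLeastSucAtMost_greaterThanAtMost)
  then have "(\<Prod>j\<in>{i<..k}. f j) = (\<Prod>d=1..k-i. f (d + i))"
    by (simp only: prod.shift_bounds_cl_nat_ivl)
  then show ?thesis by (simp add: add.commute)
qed simp

theorem lemma2:
  fixes q x s :: "'a::field" and m k :: nat and n :: int
  assumes "q \<noteq> 0" and "s \<noteq> 0" and "0 < m" and "0 < k"
  shows "det (mat (k + 1) (k + 1) (\<lambda>(i, j).
            cfib q x s (n + int m * int i) ^ j *
            cfib q x (q * s) (n + int m * int i - 1) ^ (k - j)))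
       = (- 1) powi (int (Suc k choose 2) * n + int (Suc k choose 3) * int m)
         * s powi (int (Suc k choose 2) * (n - 1) + int (Suc k choose 3) * int m)
         * q powi (int (Suc k choose 2) * (n * (n - 1) div 2)
                   + n * int m * int (Suc k choose 3)
                   + int (Suc k choose 3) * int (m choose 2)
                   + int (Suc k choose 4) * int m ^ 2)
         * (\<Prod>j=0..k-1. cfac q (k - j) x (q powi (int m * int j + n) * s) m)"
proof -
  note q = assms(1) and s = assms(2)
  define A where "A i = n + int m * int i" for i
  define a where "a i = cfib q x s (A i)" for i
  define b where "b i = cfib q x (q * s) (A i - 1)" for i
  have row: "(\<Prod>j\<in>{i<..k}. a j * b i - a i * b j)
      = cassini_value q s (A i) ^ (k - i) * cfac q (k - i) x (q powi A i * s) m" for i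
  proof -
    have "A (i + d) = A i + int (d * m)" for d by (simp add: A_def algebra_simps)
    then show ?thesis
      unfolding prod_greaterThanAtMost_shift a_def b_def
      by (simp only: prod_cfib_minors[OF q s])
  qed
  have "det (mat (k + 1) (k + 1) (\<lambda>(i, j).
            cfib q x s (n + int m * int i) ^ j * cfib q x (q * s) (n + int m * int i - 1) ^ (k - j)))
      = det (homogeneous_vandermonde k a b)"
    by (simp add: homogeneous_vandermonde_def a_def b_def A_def)
  also have "\<dots> = (\<Prod>i\<le>k. cassini_value q s (A i) ^ (k - i))
      * (\<Prod>i\<le>k. cfac q (k - i) x (q powi A i * s) m)"
    by (simp add: det_homogeneous_vandermonde row prod.distrib)
  also have "(\<Prod>i\<le>k. cfac q (k - i) x (q powi A i * s) m)
      = (\<Prod>j=0..k-1. cfac q (k - j) x (q powi (int m * int j + n) * s) m)"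
    using \<open>0 < k\<close> by (cases k) (simp_all add: cfac_def A_def atMost_atLeast0 add.commute)
  finally show ?thesis
    unfolding A_def prod_cassini_value_powers[OF q s] .
qed

end
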